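(* Let $q=p^m$ with $p$ an odd prime, $q\equiv 1\pmod 3$, $q\geq 13$. The connected components of $C_P(q)$ are exactly: (1) the $q(q-1)$ isolated vertices, which are the maps $\pi(x)=ax+b$ with $a\neq 0$ (equivalently $\pi(\infty)=\infty$); and (2) the $q-1$ induced subgraphs $[P_r]$, $r\in GF(q)\setminus\{0\}$, each of which is connected.
   Context: $PGL(2,q)$ is the group of maps $x\mapsto\frac{ax+b}{cx+d}$ ($a,b,c,d\in GF(q)$, $ad\neq bc$) acting on $GF(q)\cup\{\infty\}$ with the usual conventions ($-d/c\mapsto\infty$, $\infty\mapsto a/c$ if $c\neq0$, $\infty\mapsto\infty$ if $c=0$). For $K,i\in GF(q)$ and $r\in GF(q)\setminus\{0\}$, $f_{K,r,i}$ is the element of $PGL(2,q)$ with $f_{K,r,i}(x)=K+\frac{r}{x-i}$ for $x\notin\{i,\infty\}$, $f_{K,r,i}(\infty)=K$, $f_{K,r,i}(i)=\infty$. For $r\neq0$, $P_r=\{f_{a,r,i}: a,i\in GF(q)\}$. $hd(\pi,\sigma)$ is the number of points at which $\pi,\sigma$ differ. With distinguished element $F=\infty$, $\pi^{\triangle}$ is the permutation with $\pi^{\triangle}(\pi^{-1}(\infty))=\pi(\infty)$, $\pi^{\triangle}(\infty)=\infty$, $\pi^{\triangle}(x)=\pi(x)$ otherwise. The contraction graph $C_P(q)$ has vertex set $PGL(2,q)$, with distinct $\pi,\sigma$ adjacent iff $hd(\pi^{\triangle},\sigma^{\triangle})=q-4$. $[S]$ denotes the induced subgraph on $S$. *)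

theory Defs
  imports "HOL-Computational_Algebra.Primes" "HOL-Library.Cardinality"
begin

text \<open>The projective line GF(q) \<union> {\<infinity>} is modelled as 'a option, with None = \<infinity>.\<close>

definition mobius :: "'a::field \<Rightarrow> 'a \<Rightarrow> 'a \<Rightarrow> 'a \<Rightarrow> 'a option \<Rightarrow> 'a option" where
  "mobius a b c d x = (case x of
      None \<Rightarrow> (if c = 0 then None else Some (a / c))
    | Some y \<Rightarrow> (if c * y + d = 0 then None else Some ((a * y + b) / (c * y + d))))"

definition PGL2 :: "('a::field option \<Rightarrow> 'a option) set" where
  "PGL2 = {mobius a b c d | a b c d. a * d \<noteq> b * c}"

definition fKri :: "'a::field \<Rightarrow> 'a \<Rightarrow> 'a \<Rightarrow> 'a option \<Rightarrow> 'a option" where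
  "fKri K r i x = (case x of
      None \<Rightarrow> Some K
    | Some y \<Rightarrow> (if y = i then None else Some (K + r / (y - i))))"

definition Pset :: "'a::field \<Rightarrow> ('a option \<Rightarrow> 'a option) set" where
  "Pset r = {fKri a r i | a i. True}"

definition hd :: "('b \<Rightarrow> 'c) \<Rightarrow> ('b \<Rightarrow> 'c) \<Rightarrow> nat" where
  "hd \<pi> \<sigma> = card {x. \<pi> x \<noteq> \<sigma> x}"

text \<open>Contraction with distinguished element F = \<infinity> (None).\<close>
definition tri :: "('a option \<Rightarrow> 'a option) \<Rightarrow> 'a option \<Rightarrow> 'a option" where
  "tri \<pi> x = (if x = None then None else if \<pi> x = None then \<pi> None else \<pi> x)"

definition adjC :: "('a::{finite,field} option \<Rightarrow> 'a option) \<Rightarrow> ('a option \<Rightarrow> 'a option) \<Rightarrow> bool" where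
  "adjC \<pi> \<sigma> \<longleftrightarrow> \<pi> \<in> PGL2 \<and> \<sigma> \<in> PGL2 \<and> \<pi> \<noteq> \<sigma> \<and>
     hd (tri \<pi>) (tri \<sigma>) = card (UNIV :: 'a set) - 4"

definition induced_edges :: "('v \<Rightarrow> 'v \<Rightarrow> bool) \<Rightarrow> 'v set \<Rightarrow> ('v \<times> 'v) set" where
  "induced_edges E S = {(u, v). u \<in> S \<and> v \<in> S \<and> E u v}"

definition connected_graph :: "('v \<Rightarrow> 'v \<Rightarrow> bool) \<Rightarrow> 'v set \<Rightarrow> bool" where
  "connected_graph E S \<longleftrightarrow> S \<noteq> {} \<and> (\<forall>u\<in>S. \<forall>v\<in>S. (u, v) \<in> (induced_edges E S)\<^sup>*)"

definition components :: "('v \<Rightarrow> 'v \<Rightarrow> bool) \<Rightarrow> 'v set \<Rightarrow> 'v set set" where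
  "components E V = {{w \<in> V. (v, w) \<in> (induced_edges E V)\<^sup>*} | v. v \<in> V}"

definition affine_maps :: "('a::field option \<Rightarrow> 'a option) set" where
  "affine_maps = {mobius a b 0 1 | a b. a \<noteq> 0}"

end

theory Submission
  imports Defs "HOL-Computational_Algebra.Polynomial"
begin

text \<open>
  Two elements of PGL(2,q) are adjacent iff their contractions agree at exactly four points
  of GF(q) (both fix \<infinity>). An affine map agrees with another affine map at three points only
  if they are equal, and with a map f(K,r,i) at most at three points, because off the pole
  agreement is a quadratic equation; so affine maps are isolated. For f(K,r,i) and f(L,s,j)
  the same quadratic argument forces agreement at both poles, i.e. r = s and
  (K - L)(i - j) = r. Conversely such a pair agrees exactly at i, j and the two roots
  j - \<omega>(i - j), j - \<omega>^2(i - j), where \<omega> is a primitive cube root of unity, which exists as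
  3 divides q - 1. Thus edges never leave a class P(r), and inside P(r) the edges
  f(K,r,i) -- f(K + r/d, r, i + d) connect everything once 2 and 3 are invertible.
\<close>

section \<open>Components of a graph\<close>

lemma components_eqI:
  assumes cover: "\<Union>\<P> = V"
    and connected: "\<And>S. S \<in> \<P> \<Longrightarrow> connected_graph E S"
    and closed: "\<And>S u v. S \<in> \<P> \<Longrightarrow> u \<in> S \<Longrightarrow> v \<in> V \<Longrightarrow> E u v \<Longrightarrow> v \<in> S"
  shows "components E V = \<P>"
proof -
  have component: "{w \<in> V. (v, w) \<in> (induced_edges E V)\<^sup>*} = S" if S: "S \<in> \<P>" and v: "v \<in> S" for S v
  proof (intro set_eqI iffI)
    fix w
    assume "w \<in> {w \<in> V. (v, w) \<in> (induced_edges E V)\<^sup>*}"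
    then have "(v, w) \<in> (induced_edges E V)\<^sup>*"
      by simp
    then show "w \<in> S"
      by induction (use v closed[OF S] in \<open>auto simp: induced_edges_def\<close>)
  next
    fix w
    assume w: "w \<in> S"
    have "S \<subseteq> V"
      using S cover by blast
    then have "induced_edges E S \<subseteq> induced_edges E V"
      by (auto simp: induced_edges_def)
    moreover have "(v, w) \<in> (induced_edges E S)\<^sup>*"
      using connected[OF S] v w by (simp add: connected_graph_def)
    ultimately show "w \<in> {w \<in> V. (v, w) \<in> (induced_edges E V)\<^sup>*}"
      using rtrancl_mono w \<open>S \<subseteq> V\<close> by blast
  qed
  show ?thesis
  proof (intro set_eqI iffI)
    fix C
    assume "C \<in> components E V"
    then obtain v where "v \<in> V" and C: "C = {w \<in> V. (v, w) \<in> (induced_edges E V)\<^sup>*}"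
      by (auto simp: components_def)
    then obtain S where "S \<in> \<P>" "v \<in> S"
      using cover by blast
    then show "C \<in> \<P>"
      using C component by simp
  next
    fix S
    assume S: "S \<in> \<P>"
    then obtain v where "v \<in> S"
      using connected by (force simp: connected_graph_def)
    moreover have "v \<in> V"
      using S \<open>v \<in> S\<close> cover by blast
    ultimately show "S \<in> components E V"
      using component[OF S] by (auto simp: components_def)
  qed
qed

lemma connected_graph_singleton: "connected_graph E {v}"
  by (simp add: connected_graph_def)

section \<open>Finite fields\<close>

lemma of_nat_CARD_eq_0: "of_nat CARD('a) = (0::'a::{finite,field})"
proof -
  have "bij (\<lambda>x::'a. x + 1)"
    by (rule bijI') (auto intro: exI[of _ "_ - 1"])
  then have "(\<Sum>x\<in>UNIV. x + 1) = (\<Sum>x\<in>UNIV. x::'a)"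
    using sum.reindex_bij_betw[of "\<lambda>x::'a. x + 1" UNIV UNIV "\<lambda>x. x"] by simp
  then show ?thesis
    by (simp add: sum.distrib)
qed

lemma of_nat_ne_0_if_CARD_mod_eq_1:
  assumes "CARD('a) mod n = 1"
  shows "of_nat n \<noteq> (0::'a::{finite,field})"
proof
  assume n0: "of_nat n = (0::'a)"
  have "CARD('a) = CARD('a) div n * n + 1"
    using mod_div_mult_eq[of "CARD('a)" n] assms by linarith
  then have "(of_nat CARD('a)::'a) = of_nat (CARD('a) div n) * of_nat n + 1"
    by (metis of_nat_add of_nat_mult of_nat_1)
  then show False
    using of_nat_CARD_eq_0[where 'a='a] n0 by simp
qed

lemma power_CARD_minus_1_eq_1:
  assumes "(a::'a::{finite,field}) \<noteq> 0"
  shows "a ^ (CARD('a) - 1) = 1"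
proof -
  let ?U = "UNIV - {0::'a}"
  have "bij_betw (\<lambda>x. a * x) ?U ?U"
    by (rule bij_betw_byWitness[where f'="\<lambda>x. x / a"]) (use assms in auto)
  then have "(\<Prod>x\<in>?U. a * x) = (\<Prod>x\<in>?U. x)"
    using prod.reindex_bij_betw[of "\<lambda>x. a * x" ?U ?U "\<lambda>x. x"] by simp
  moreover have "(\<Prod>x\<in>?U. a * x) = a ^ card ?U * (\<Prod>x\<in>?U. x)"
    by (simp add: prod.distrib)
  moreover have "card ?U = CARD('a) - 1"
    by (simp add: card_Diff_subset)
  ultimately show ?thesis
    by simp
qed

lemma card_roots_of_unity_le:
  assumes "n \<ge> 1"
  shows "card {x::'a::idom. x ^ n = 1} \<le> n"
proof -
  let ?p = "monom (1::'a) n + [:-1:]"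
  have deg: "degree ?p = n"
    using assms by (subst degree_add_eq_left) (simp_all add: degree_monom_eq)
  then have "?p \<noteq> 0"
    using assms by auto
  moreover have "{x. x ^ n = 1} = {x. poly ?p x = 0}"
    by (simp add: poly_monom)
  ultimately show ?thesis
    using card_poly_roots_bound deg by metis
qed

lemma cube_root_of_unity_exists:
  assumes "CARD('a) mod 3 = 1" and "CARD('a) \<ge> 4"
  obtains w :: "'a::{finite,field}" where "w\<^sup>2 + w + 1 = 0"
proof -
  define k where "k = (CARD('a) - 1) div 3"
  have k: "CARD('a) - 1 = 3 * k" "k \<ge> 1"
    using assms unfolding k_def by presburger+
  have "card {x::'a. x ^ k = 1} < card (UNIV - {0::'a})"
    using card_roots_of_unity_le[OF k(2), where 'a='a] k by (simp add: card_Diff_subset)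
  then have "\<not> UNIV - {0::'a} \<subseteq> {x. x ^ k = 1}"
    by (metis card_mono finite leD)
  then obtain a :: 'a where a: "a \<noteq> 0" "a ^ k \<noteq> 1"
    by blast
  have cube: "(a ^ k) ^ 3 = 1"
    using power_CARD_minus_1_eq_1[OF a(1)] k by (simp add: power_mult[symmetric] mult.commute)
  have "(x - 1) * (x\<^sup>2 + x + 1) = x ^ 3 - 1" for x :: 'a
    by (simp add: algebra_simps power2_eq_square power3_eq_cube)
  from this[of "a ^ k"] cube a(2) show ?thesis
    using that by simp
qed

lemma quadratic_coeffs_eq_0_if_three_roots:
  fixes a b c :: "'a::field"
  assumes roots: "\<And>y. y \<in> A \<Longrightarrow> a * y\<^sup>2 + b * y + c = 0" and three: "card A \<ge> 3"
  shows "a = 0 \<and> b = 0 \<and> c = 0"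
proof -
  let ?p = "[:c, b, a:]"
  have "?p = 0"
  proof (rule ccontr)
    assume p: "?p \<noteq> 0"
    have "A \<subseteq> {x. poly ?p x = 0}"
      using roots by (auto simp: algebra_simps power2_eq_square)
    then have "card A \<le> card {x. poly ?p x = 0}"
      using poly_roots_finite[OF p] by (rule card_mono[rotated])
    also have "\<dots> \<le> degree ?p"
      using card_poly_roots_bound[OF p] .
    also have "\<dots> \<le> 2"
      by (simp add: degree_pCons_le)
    finally show False
      using three by simp
  qed
  then show ?thesis
    by simp
qed

section \<open>Normal forms in PGL(2,q)\<close>

lemma mobius_affine_None [simp]: "mobius a b 0 1 None = None"
  by (simp add: mobius_def)

lemma mobius_affine_Some [simp]: "mobius a b 0 1 (Some y) = Some (a * y + b)"
  by (simp add: mobius_def)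

lemma fKri_None [simp]: "fKri K r i None = Some K"
  by (simp add: fKri_def)

lemma fKri_Some: "fKri K r i (Some y) = (if y = i then None else Some (K + r / (y - i)))"
  by (simp add: fKri_def)

lemma mobius_eq_affine: "d \<noteq> 0 \<Longrightarrow> mobius a b 0 d = mobius (a / d) (b / d) 0 1"
  by (auto simp: mobius_def fun_eq_iff add_divide_distrib split: option.split)

lemma mobius_eq_fKri:
  assumes c: "c \<noteq> 0"
  shows "mobius a b c d = fKri (a / c) ((b * c - a * d) / c\<^sup>2) (- d / c)"
proof
  fix x
  show "mobius a b c d x = fKri (a / c) ((b * c - a * d) / c\<^sup>2) (- d / c) x"
  proof (cases x)
    case None
    then show ?thesis
      using c by (simp add: mobius_def)
  next
    case (Some y)
    have pole: "c * y + d = 0 \<longleftrightarrow> y = - d / c"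
      using c by (auto simp: field_simps add_eq_0_iff)
    have "a / c + (b * c - a * d) / c\<^sup>2 / (y - - d / c) = (a * y + b) / (c * y + d)"
      if nz: "c * y + d \<noteq> 0"
    proof -
      have "y - - d / c = (c * y + d) / c"
        using c by (simp add: field_simps)
      then have "(b * c - a * d) / c\<^sup>2 / (y - - d / c) = (b * c - a * d) / c\<^sup>2 / ((c * y + d) / c)"
        by (simp only:)
      also have "\<dots> = (b * c - a * d) / (c * (c * y + d))"
        using c nz by (simp add: power2_eq_square)
      finally have "(b * c - a * d) / c\<^sup>2 / (y - - d / c) = (b * c - a * d) / (c * (c * y + d))" .
      moreover have "a / c + (b * c - a * d) / (c * (c * y + d)) = (a * y + b) / (c * y + d)"
        using c nz by (simp add: divide_simps) (simp add: algebra_simps)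
      ultimately show ?thesis
        by metis
    qed
    then show ?thesis
      using Some pole by (simp add: mobius_def fKri_Some)
  qed
qed

lemma fKri_eq_mobius: "fKri K r i = mobius K (r - K * i) 1 (- i)"
  by (simp add: mobius_eq_fKri)

lemma fKri_in_PGL2: "r \<noteq> 0 \<Longrightarrow> fKri K r i \<in> PGL2"
  unfolding PGL2_def fKri_eq_mobius by force

lemma mobius_affine_in_PGL2: "a \<noteq> 0 \<Longrightarrow> mobius a b 0 1 \<in> PGL2"
  unfolding PGL2_def by force

lemma PGL2_cases:
  assumes "\<pi> \<in> PGL2"
  obtains (affine) a b where "a \<noteq> 0" "\<pi> = mobius a b 0 1"
    | (fKri) K r i where "r \<noteq> 0" "\<pi> = fKri K r i"
proof -
  obtain a b c d where \<pi>: "\<pi> = mobius a b c d" and det: "a * d \<noteq> b * c"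
    using assms unfolding PGL2_def by blast
  show thesis
  proof (cases "c = 0")
    case True
    then have "d \<noteq> 0" "a / d \<noteq> 0"
      using det by auto
    then show thesis
      using affine \<pi> True mobius_eq_affine by metis
  next
    case False
    then have "(b * c - a * d) / c\<^sup>2 \<noteq> 0"
      using det by auto
    then show thesis
      using fKri \<pi> False mobius_eq_fKri by metis
  qed
qed

lemma fKri_eq_iff: "fKri K r i = fKri L s j \<longleftrightarrow> K = L \<and> r = s \<and> i = j"
proof
  assume eq: "fKri K r i = fKri L s j"
  have K: "K = L"
    using fun_cong[OF eq, of None] by simp
  have i: "i = j"
    using fun_cong[OF eq, of "Some i"] by (simp add: fKri_Some split: if_splits)
  have "r = s"
    using fun_cong[OF eq, of "Some (i + 1)"] K i by (simp add: fKri_Some)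
  with K i show "K = L \<and> r = s \<and> i = j"
    by simp
qed simp

lemma mobius_affine_eq_iff:
  "mobius a b 0 1 = mobius a' b' 0 (1::'a::field) \<longleftrightarrow> a = a' \<and> b = b'"
proof
  assume eq: "mobius a b 0 1 = mobius a' b' 0 (1::'a)"
  have "b = b'"
    using fun_cong[OF eq, of "Some 0"] by simp
  moreover have "a + b = a' + b'"
    using fun_cong[OF eq, of "Some 1"] by simp
  ultimately show "a = a' \<and> b = b'"
    by simp
qed simp

lemma mobius_affine_ne_fKri: "mobius a b 0 1 \<noteq> fKri K r i"
  by (metis fKri_None mobius_affine_None option.distinct(1))

lemma fKri_in_Pset_iff: "fKri K r i \<in> Pset s \<longleftrightarrow> r = s"
  by (auto simp: Pset_def fKri_eq_iff)

lemma Pset_subset_PGL2: "r \<noteq> 0 \<Longrightarrow> Pset r \<subseteq> PGL2"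
  by (auto simp: Pset_def fKri_in_PGL2)

lemma affine_maps_eq: "affine_maps = {\<pi> \<in> PGL2. \<pi> None = None}"
proof (intro set_eqI iffI)
  fix \<pi> :: "'a option \<Rightarrow> 'a option"
  assume "\<pi> \<in> {\<pi> \<in> PGL2. \<pi> None = None}"
  then have "\<pi> \<in> PGL2" "\<pi> None = None"
    by auto
  then show "\<pi> \<in> affine_maps"
    by (cases rule: PGL2_cases) (auto simp: affine_maps_def)
qed (auto simp: affine_maps_def mobius_affine_in_PGL2)

lemma card_affine_maps:
  "card (affine_maps :: ('a::{finite,field} option \<Rightarrow> 'a option) set) = CARD('a) * (CARD('a) - 1)"
proof -
  let ?A = "(UNIV - {0::'a}) \<times> (UNIV::'a set)"
  have eq: "affine_maps = (\<lambda>(a, b). mobius a b 0 (1::'a)) ` ?A"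
    unfolding affine_maps_def by auto
  have "inj_on (\<lambda>(a, b). mobius a b 0 (1::'a)) ?A"
    by (rule inj_onI) (auto simp: mobius_affine_eq_iff)
  then have "card (affine_maps :: ('a option \<Rightarrow> 'a option) set) = card ?A"
    unfolding eq by (rule card_image)
  then show ?thesis
    by (simp add: card_cartesian_product card_Diff_subset mult.commute)
qed

lemma card_Psets: "card {Pset r | r::'a::{finite,field}. r \<noteq> 0} = CARD('a) - 1"
proof -
  have "inj_on (Pset :: 'a \<Rightarrow> _) (UNIV - {0})"
    by (rule inj_onI) (metis fKri_in_Pset_iff)
  moreover have "{Pset r | r::'a. r \<noteq> 0} = Pset ` (UNIV - {0})"
    by auto
  ultimately show ?thesis
    by (simp add: card_image card_Diff_subset)
qed

lemma PGL2_eq_affine_maps_Un_Psets: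
  "PGL2 = affine_maps \<union> (\<Union>r\<in>{r. r \<noteq> 0}. Pset r)"
proof (intro equalityI subsetI)
  fix \<pi> :: "'a option \<Rightarrow> 'a option"
  assume "\<pi> \<in> PGL2"
  then show "\<pi> \<in> affine_maps \<union> (\<Union>r\<in>{r. r \<noteq> 0}. Pset r)"
    by (cases rule: PGL2_cases) (auto simp: affine_maps_def fKri_in_Pset_iff)
qed (auto simp: affine_maps_eq dest: Pset_subset_PGL2)

section \<open>Agreement sets of contractions\<close>

definition agreement :: "('a option \<Rightarrow> 'a option) \<Rightarrow> ('a option \<Rightarrow> 'a option) \<Rightarrow> 'a set" where
  "agreement \<pi> \<sigma> = {y. tri \<pi> (Some y) = tri \<sigma> (Some y)}"

text \<open>The contraction of f(K,r,i) on GF(q): the pole i is sent to f(K,r,i)(\<infinity>) = K.\<close>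

definition fKri_tri :: "'a::field \<Rightarrow> 'a \<Rightarrow> 'a \<Rightarrow> 'a \<Rightarrow> 'a" where
  "fKri_tri K r i y = (if y = i then K else K + r / (y - i))"

lemma tri_mobius_affine_Some [simp]: "tri (mobius a b 0 1) (Some y) = Some (a * y + b)"
  by (simp add: tri_def)

lemma tri_fKri_Some [simp]: "tri (fKri K r i) (Some y) = Some (fKri_tri K r i y)"
  by (simp add: tri_def fKri_tri_def fKri_Some)

lemma hd_tri_eq:
  fixes \<pi> \<sigma> :: "'a::finite option \<Rightarrow> 'a option"
  shows "hd (tri \<pi>) (tri \<sigma>) = CARD('a) - card (agreement \<pi> \<sigma>)"
proof -
  have "{x. tri \<pi> x \<noteq> tri \<sigma> x} = Some ` (UNIV - agreement \<pi> \<sigma>)"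
    by (auto simp: agreement_def tri_def)
  moreover have "card (UNIV - agreement \<pi> \<sigma>) = CARD('a) - card (agreement \<pi> \<sigma>)"
    using card_Diff_subset[of "agreement \<pi> \<sigma>" UNIV] by simp
  ultimately show ?thesis
    by (simp add: hd_def card_image)
qed

lemma adjC_iff_card_agreement:
  assumes "CARD('a::{finite,field}) \<ge> 4"
  shows "adjC (\<pi>::'a option \<Rightarrow> 'a option) \<sigma> \<longleftrightarrow>
    \<pi> \<in> PGL2 \<and> \<sigma> \<in> PGL2 \<and> \<pi> \<noteq> \<sigma> \<and> card (agreement \<pi> \<sigma>) = 4"
proof -
  have "card (agreement \<pi> \<sigma>) \<le> CARD('a)"
    by (rule card_mono) auto
  then have "CARD('a) - card (agreement \<pi> \<sigma>) = CARD('a) - 4 \<longleftrightarrow> card (agreement \<pi> \<sigma>) = 4"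
    using assms by arith
  then show ?thesis
    by (simp add: adjC_def hd_tri_eq)
qed

lemma mobius_affine_eq_if_card_agreement_ge_3:
  fixes a b a' b' :: "'a::field"
  assumes "card {y. a * y + b = a' * y + b'} \<ge> 3"
  shows "a = a' \<and> b = b'"
proof -
  have "0 = (0::'a) \<and> a - a' = 0 \<and> b - b' = 0"
    by (rule quadratic_coeffs_eq_0_if_three_roots[OF _ assms]) (simp add: algebra_simps)
  then show ?thesis
    by simp
qed

lemma card_agreement_affine_fKri_le_3:
  fixes a b K r i :: "'a::field"
  assumes "a \<noteq> 0"
  shows "card {y. a * y + b = fKri_tri K r i y} \<le> 3"
proof (rule ccontr)
  let ?A = "{y. a * y + b = fKri_tri K r i y}"
  assume "\<not> card ?A \<le> 3"
  then have "card (?A - {i}) \<ge> 3"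
    using diff_card_le_card_Diff[of "{i}" ?A] by simp
  then have "a = 0 \<and> b - K - a * i = 0 \<and> K * i - b * i - r = 0"
  proof (rule quadratic_coeffs_eq_0_if_three_roots[rotated])
    fix y
    assume "y \<in> ?A - {i}"
    then have "y - i \<noteq> 0" "a * y + b - K = r / (y - i)"
      by (auto simp: fKri_tri_def)
    then have "(a * y + b - K) * (y - i) = r"
      by (simp add: field_simps)
    then show "a * y\<^sup>2 + (b - K - a * i) * y + (K * i - b * i - r) = 0"
      by (simp add: algebra_simps power2_eq_square)
  qed
  then show False
    using assms by simp
qed

lemma fKri_tri_eq_if_same_pole:
  fixes K L r s i :: "'a::field"
  assumes "card {y. fKri_tri K r i y = fKri_tri L s i y} \<ge> 4"
  shows "K = L \<and> r = s"
proof -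
  let ?A = "{y. fKri_tri K r i y = fKri_tri L s i y}"
  have "card (?A - {i}) \<ge> 3"
    using assms diff_card_le_card_Diff[of "{i}" ?A] by simp
  then have "0 = (0::'a) \<and> K - L = 0 \<and> r - s - (K - L) * i = 0"
  proof (rule quadratic_coeffs_eq_0_if_three_roots[rotated])
    fix y
    assume "y \<in> ?A - {i}"
    then have "y - i \<noteq> 0" "K + r / (y - i) = L + s / (y - i)"
      by (auto simp: fKri_tri_def)
    then have "K * (y - i) + r = L * (y - i) + s"
      by (simp add: field_simps)
    then show "0 * y\<^sup>2 + (K - L) * y + (r - s - (K - L) * i) = 0"
      by (simp add: algebra_simps)
  qed
  then show ?thesis
    by auto
qed

lemma card_agreement_fKri_off_poles_le_2:
  fixes K L r s i j :: "'a::field"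
  assumes "r \<noteq> 0" and "i \<noteq> j"
  shows "card ({y. fKri_tri K r i y = fKri_tri L s j y} - {i, j}) \<le> 2"
proof (rule ccontr)
  let ?A = "{y. fKri_tri K r i y = fKri_tri L s j y} - {i, j}"
  assume "\<not> card ?A \<le> 2"
  then have "K - L = 0 \<and> r - s - (K - L) * (i + j) = 0 \<and> (K - L) * i * j - r * j + s * i = 0"
  proof (intro quadratic_coeffs_eq_0_if_three_roots[of ?A])
    fix y
    assume "y \<in> ?A"
    then have "y - i \<noteq> 0" "y - j \<noteq> 0" "K + r / (y - i) = L + s / (y - j)"
      by (auto simp: fKri_tri_def)
    then have "K * ((y - i) * (y - j)) + r * (y - j) = L * ((y - i) * (y - j)) + s * (y - i)"
      by (simp add: field_simps)
    then show "(K - L) * y\<^sup>2 + (r - s - (K - L) * (i + j)) * y + ((K - L) * i * j - r * j + s * i) = 0"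
      by (simp add: algebra_simps power2_eq_square)
  qed simp
  then have "K = L" "r = s" "s * i - r * j = 0"
    by auto
  then have "r * (i - j) = 0"
    by (simp add: algebra_simps)
  then show False
    using assms by simp
qed

lemma fKri_tri_at_pole_iff:
  assumes "i \<noteq> j"
  shows "fKri_tri K r i i = fKri_tri L s j i \<longleftrightarrow> (K - L) * (i - j) = s"
proof -
  have "i - j \<noteq> 0"
    using assms by simp
  then show ?thesis
    using assms by (auto simp: fKri_tri_def field_simps)
qed

lemma card_agreement_fKri_eq_4:
  fixes K L r s i j :: "'a::field"
  assumes r: "r \<noteq> 0" and s: "s \<noteq> 0"
    and four: "card {y. fKri_tri K r i y = fKri_tri L s j y} = 4"
    and ne: "\<not> (K = L \<and> r = s \<and> i = j)"
  shows "r = s \<and> i \<noteq> j \<and> (K - L) * (i - j) = r"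
proof -
  let ?A = "{y. fKri_tri K r i y = fKri_tri L s j y}"
  have ij: "i \<noteq> j"
    using fKri_tri_eq_if_same_pole[of K r i L s] four ne by auto
  have "finite ?A"
    using four card.infinite by fastforce
  then have "card ?A = card (?A \<inter> {i, j}) + card (?A - {i, j})"
    by (rule card_Int_Diff)
  moreover have "card (?A - {i, j}) \<le> 2"
    by (rule card_agreement_fKri_off_poles_le_2[OF r ij])
  ultimately have "card (?A \<inter> {i, j}) \<ge> card {i, j}"
    using four ij by simp
  then have "?A \<inter> {i, j} = {i, j}"
    by (intro card_seteq) auto
  then have "i \<in> ?A" "j \<in> ?A"
    by auto
  then have "fKri_tri K r i i = fKri_tri L s j i" "fKri_tri L s j j = fKri_tri K r i j"
    by auto
  then have "(K - L) * (i - j) = s" "(L - K) * (j - i) = r"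
    using fKri_tri_at_pole_iff[OF ij] fKri_tri_at_pole_iff[OF ij[symmetric]] by blast+
  then show ?thesis
    using ij by (simp add: algebra_simps)
qed

section \<open>Edges of the contraction graph\<close>

lemma agreement_commute: "agreement \<pi> \<sigma> = agreement \<sigma> \<pi>"
  by (auto simp: agreement_def)

lemma eq_mobius_affine_if_card_agreement_eq_4:
  fixes \<sigma> :: "'a::{finite,field} option \<Rightarrow> 'a option"
  assumes "a \<noteq> 0" and "\<sigma> \<in> PGL2" and four: "card (agreement (mobius a b 0 1) \<sigma>) = 4"
  shows "\<sigma> = mobius a b 0 1"
  using \<open>\<sigma> \<in> PGL2\<close>
proof (cases rule: PGL2_cases)
  case (affine a' b')
  then have "a = a' \<and> b = b'"
    using four by (intro mobius_affine_eq_if_card_agreement_ge_3) (simp add: agreement_def)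
  then show ?thesis
    using affine by simp
next
  case (fKri K r i)
  then show ?thesis
    using four card_agreement_affine_fKri_le_3[OF \<open>a \<noteq> 0\<close>, of b K r i]
    by (simp add: agreement_def)
qed

lemma adjC_imp_fKri:
  fixes \<pi> \<sigma> :: "'a::{finite,field} option \<Rightarrow> 'a option"
  assumes card: "CARD('a) \<ge> 4" and adj: "adjC \<pi> \<sigma>"
  obtains K L r i j where "r \<noteq> 0" "\<pi> = fKri K r i" "\<sigma> = fKri L r j" "(K - L) * (i - j) = r"
proof -
  have \<pi>: "\<pi> \<in> PGL2" and \<sigma>: "\<sigma> \<in> PGL2" and ne: "\<pi> \<noteq> \<sigma>"
    and four: "card (agreement \<pi> \<sigma>) = 4"
    using adj by (simp_all add: adjC_iff_card_agreement[OF card])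
  from \<pi> show thesis
  proof (cases rule: PGL2_cases)
    case (affine a b)
    then show thesis
      using eq_mobius_affine_if_card_agreement_eq_4 \<sigma> four ne by metis
  next
    case \<pi>_fKri: (fKri K r i)
    from \<sigma> show thesis
    proof (cases rule: PGL2_cases)
      case (affine a b)
      then show thesis
        using eq_mobius_affine_if_card_agreement_eq_4 \<pi> four ne agreement_commute by metis
    next
      case (fKri L s j)
      have "\<not> (K = L \<and> r = s \<and> i = j)"
        using ne \<pi>_fKri fKri by auto
      then have "r = s \<and> (K - L) * (i - j) = r"
        using card_agreement_fKri_eq_4[OF \<open>r \<noteq> 0\<close> \<open>s \<noteq> 0\<close>] four \<pi>_fKri fKri
        by (simp add: agreement_def)
      then show thesis
        using that \<pi>_fKri fKri by blast
    qed
  qed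
qed

lemma affine_maps_isolated:
  fixes \<pi> \<sigma> :: "'a::{finite,field} option \<Rightarrow> 'a option"
  assumes card: "CARD('a) \<ge> 4" and "\<pi> \<in> affine_maps"
  shows "\<not> adjC \<pi> \<sigma>"
proof
  assume "adjC \<pi> \<sigma>"
  then obtain K L r i j where "r \<noteq> 0" "\<pi> = fKri K r i" "\<sigma> = fKri L r j" "(K - L) * (i - j) = r"
    by (rule adjC_imp_fKri[OF card])
  moreover obtain a b where "\<pi> = mobius a b 0 1"
    using \<open>\<pi> \<in> affine_maps\<close> by (auto simp: affine_maps_def)
  ultimately show False
    using mobius_affine_ne_fKri by metis
qed

lemma adjC_Pset_closed:
  fixes \<pi> \<sigma> :: "'a::{finite,field} option \<Rightarrow> 'a option"
  assumes card: "CARD('a) \<ge> 4" and "\<pi> \<in> Pset r" and "adjC \<pi> \<sigma>"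
  shows "\<sigma> \<in> Pset r"
proof -
  obtain K L s i j where "\<pi> = fKri K s i" "\<sigma> = fKri L s j"
    using adjC_imp_fKri[OF card \<open>adjC \<pi> \<sigma>\<close>] by metis
  then show ?thesis
    using \<open>\<pi> \<in> Pset r\<close> by (simp add: fKri_in_Pset_iff)
qed

lemma agreement_fKri_adjacent:
  fixes w K L r i j :: "'a::field"
  assumes w: "w\<^sup>2 + w + 1 = 0" and r: "(K - L) * (i - j) = r" "r \<noteq> 0"
  shows "{y. fKri_tri K r i y = fKri_tri L r j y} = {i, j, j - w * (i - j), j - w\<^sup>2 * (i - j)}"
proof -
  have KL: "K - L \<noteq> 0" and ij: "i - j \<noteq> 0"
    using r by auto
  have w3: "w ^ 3 = 1"
  proof -
    have "w ^ 3 - 1 = (w - 1) * (w\<^sup>2 + w + 1)"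
      by (simp add: algebra_simps power2_eq_square power3_eq_cube)
    then show ?thesis
      using w by simp
  qed
  have off_poles: "fKri_tri K r i y = fKri_tri L r j y \<longleftrightarrow> y = j - w * (i - j) \<or> y = j - w\<^sup>2 * (i - j)"
    if "y \<noteq> i" "y \<noteq> j" for y
  proof -
    have yi: "y - i \<noteq> 0" and yj: "y - j \<noteq> 0"
      using that by auto
    have "fKri_tri K r i y - fKri_tri L r j y
        = K + (K - L) * (i - j) / (y - i) - (L + (K - L) * (i - j) / (y - j))"
      using that r(1) by (simp add: fKri_tri_def)
    also have "\<dots> = (K - L) * ((y - i) * (y - j) + (i - j)\<^sup>2) / ((y - i) * (y - j))"
      using yi yj by (simp add: field_simps) (simp add: algebra_simps power2_eq_square)
    finally have diff: "fKri_tri K r i y - fKri_tri L r j y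
        = (K - L) * ((y - i) * (y - j) + (i - j)\<^sup>2) / ((y - i) * (y - j))" .
    have "(y - (j - w * (i - j))) * (y - (j - w\<^sup>2 * (i - j)))
        = (y - i) * (y - j) + (i - j)\<^sup>2 + (i - j) * (y - j) * (w\<^sup>2 + w + 1) + (i - j)\<^sup>2 * (w ^ 3 - 1)"
      by (simp add: algebra_simps power2_eq_square power3_eq_cube)
    then have factor: "(y - i) * (y - j) + (i - j)\<^sup>2 = (y - (j - w * (i - j))) * (y - (j - w\<^sup>2 * (i - j)))"
      by (simp add: w w3)
    have "fKri_tri K r i y = fKri_tri L r j y \<longleftrightarrow> fKri_tri K r i y - fKri_tri L r j y = 0"
      by simp
    also have "\<dots> \<longleftrightarrow> (y - (j - w * (i - j))) * (y - (j - w\<^sup>2 * (i - j))) = 0"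
      unfolding diff factor using KL yi yj by simp
    finally show ?thesis
      by simp
  qed
  have poles: "fKri_tri K r i i = fKri_tri L r j i" "fKri_tri K r i j = fKri_tri L r j j"
    using fKri_tri_at_pole_iff[of i j K r L r] fKri_tri_at_pole_iff[of j i L r K r] ij r
    by (auto simp: algebra_simps)
  show ?thesis
  proof (rule set_eqI)
    fix y
    show "y \<in> {y. fKri_tri K r i y = fKri_tri L r j y} \<longleftrightarrow> y \<in> {i, j, j - w * (i - j), j - w\<^sup>2 * (i - j)}"
      using poles off_poles[of y] by (cases "y = i \<or> y = j") auto
  qed
qed

lemma card_agreement_fKri_adjacent:
  fixes w K L r i j :: "'a::field"
  assumes w: "w\<^sup>2 + w + 1 = 0" and three: "(3::'a) \<noteq> 0"
    and r: "(K - L) * (i - j) = r" "r \<noteq> 0"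
  shows "card {y. fKri_tri K r i y = fKri_tri L r j y} = 4"
proof -
  have ij: "i - j \<noteq> 0"
    using r by auto
  have w0: "w \<noteq> 0" and w1: "w \<noteq> 1" and "w \<noteq> -1"
    using w three by auto
  have "w\<^sup>2 \<noteq> -1"
  proof
    assume "w\<^sup>2 = -1"
    then show False
      using w w0 by simp
  qed
  moreover have "w \<noteq> w\<^sup>2"
  proof
    assume "w = w\<^sup>2"
    then have "w * (w - 1) = 0"
      by (simp add: algebra_simps power2_eq_square)
    then show False
      using w0 w1 by simp
  qed
  ultimately have "distinct [-1, 0, w, w\<^sup>2]"
    using w0 \<open>w \<noteq> -1\<close> by auto
  moreover have "inj_on (\<lambda>t. j - t * (i - j)) (set [-1, 0, w, w\<^sup>2])"
    by (rule inj_on_subset[of _ UNIV]) (use ij in \<open>auto intro: injI\<close>)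
  moreover have "(\<lambda>t. j - t * (i - j)) ` set [-1, 0, w, w\<^sup>2] = {y. fKri_tri K r i y = fKri_tri L r j y}"
    unfolding agreement_fKri_adjacent[OF w r] by simp
  ultimately have "card {y. fKri_tri K r i y = fKri_tri L r j y} = length [-1, 0, w, w\<^sup>2]"
    by (metis card_image distinct_card)
  then show ?thesis
    by simp
qed

lemma adjC_fKri:
  fixes w K L r i j :: "'a::{finite,field}"
  assumes "CARD('a) \<ge> 4" and "w\<^sup>2 + w + 1 = 0" and "(3::'a) \<noteq> 0"
    and r: "(K - L) * (i - j) = r" "r \<noteq> 0"
  shows "adjC (fKri K r i) (fKri L r j)"
proof -
  have "i \<noteq> j"
    using r by auto
  then show ?thesis
    using assms card_agreement_fKri_adjacent
    by (simp add: adjC_iff_card_agreement agreement_def fKri_in_PGL2 fKri_eq_iff)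
qed

lemma fKri_reachable_in_Pset:
  fixes w K L r i j :: "'a::{finite,field}"
  assumes card: "CARD('a) \<ge> 4" and w: "w\<^sup>2 + w + 1 = 0"
    and two: "(2::'a) \<noteq> 0" and three: "(3::'a) \<noteq> 0" and r: "r \<noteq> 0"
  shows "(fKri K r i, fKri L r j) \<in> (induced_edges adjC (Pset r))\<^sup>*"
proof -
  let ?E = "induced_edges adjC (Pset r)"
  have step: "(fKri K r i, fKri (K + r / d) r (i + d)) \<in> ?E" if "d \<noteq> 0" for K i d
  proof -
    have "(K - (K + r / d)) * (i - (i + d)) = r"
      using that by simp
    then have "adjC (fKri K r i) (fKri (K + r / d) r (i + d))"
      by (rule adjC_fKri[OF card w three _ r])
    moreover have "fKri K r i \<in> Pset r" "fKri (K + r / d) r (i + d) \<in> Pset r"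
      by (simp_all add: fKri_in_Pset_iff)
    ultimately show ?thesis
      by (simp add: induced_edges_def)
  qed
  txt \<open>Edges with pole shifts d, d, -2d return to the pole i and add 3r/(2d) to K.\<close>
  have shift: "(fKri K r i, fKri (K + x) r i) \<in> ?E\<^sup>*" for K i x
  proof (cases "x = 0")
    case False
    have six: "(6::'a) \<noteq> 0"
      using no_zero_divisors[OF two three] by simp
    define d where "d = 3 * r / (2 * x)"
    have d: "d \<noteq> 0" "- (2 * d) \<noteq> 0"
      using two three six r False by (simp_all add: d_def)
    have "x = 3 * r / (2 * d)"
      using two three six r False by (simp add: d_def)
    also have "\<dots> = r / d + r / d + r / (- (2 * d))"
      using two d by (simp add: field_simps)
    finally have "r / d + r / d + r / (- (2 * d)) = x" ..
    then have "(fKri (K + r / d + r / d) r (i + d + d), fKri (K + x) r i) \<in> ?E"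
      using step[OF d(2), of "K + r / d + r / d" "i + d + d"] by (simp add: algebra_simps)
    then show ?thesis
      using step[OF d(1), of K i] step[OF d(1), of "K + r / d" "i + d"]
      by (meson r_into_rtrancl rtrancl_into_rtrancl)
  qed simp
  show ?thesis
  proof (cases "i = j")
    case False
    then have "(fKri K r i, fKri (K + r / (j - i)) r j) \<in> ?E"
      using step[of "j - i" K i] by simp
    then show ?thesis
      using shift[of "K + r / (j - i)" j "L - (K + r / (j - i))"]
      by (simp add: converse_rtrancl_into_rtrancl)
  qed (use shift[of K i "L - K"] in simp)
qed

lemma connected_graph_Pset:
  fixes w r :: "'a::{finite,field}"
  assumes "CARD('a) \<ge> 4" and "w\<^sup>2 + w + 1 = 0" and "(2::'a) \<noteq> 0" and "(3::'a) \<noteq> 0" and "r \<noteq> 0"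
  shows "connected_graph adjC (Pset r)"
  using fKri_reachable_in_Pset[OF assms] by (auto simp: connected_graph_def Pset_def)

theorem theorem14:
  fixes dummy :: "'a::{finite,field}"
  assumes "\<exists>p m. prime (p::nat) \<and> odd p \<and> m \<ge> 1 \<and> CARD('a) = p ^ m"
    and "CARD('a) mod 3 = 1"
    and "CARD('a) \<ge> 13"
  shows "components (adjC :: ('a option \<Rightarrow> 'a option) \<Rightarrow> _) PGL2
           = {{\<pi>} | \<pi>. \<pi> \<in> (affine_maps :: ('a option \<Rightarrow> 'a option) set)}
             \<union> {Pset r | r::'a. r \<noteq> 0}
    \<and> (affine_maps :: ('a option \<Rightarrow> 'a option) set) = {\<pi> \<in> PGL2. \<pi> None = None}
    \<and> card (affine_maps :: ('a option \<Rightarrow> 'a option) set) = CARD('a) * (CARD('a) - 1)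
    \<and> (\<forall>\<pi> \<in> (affine_maps :: ('a option \<Rightarrow> 'a option) set). \<forall>\<sigma>. \<not> adjC \<pi> \<sigma>)
    \<and> card {Pset r | r::'a. r \<noteq> 0} = CARD('a) - 1
    \<and> (\<forall>r::'a. r \<noteq> 0 \<longrightarrow> connected_graph adjC (Pset r))"
proof -
  have card: "CARD('a) \<ge> 4"
    using assms(3) by simp
  have "odd CARD('a)"
    using assms(1) by auto
  then have "CARD('a) mod 2 = 1"
    by (simp add: odd_iff_mod_2_eq_one)
  from of_nat_ne_0_if_CARD_mod_eq_1[OF this] have two: "(2::'a) \<noteq> 0"
    by simp
  from of_nat_ne_0_if_CARD_mod_eq_1[OF assms(2)] have three: "(3::'a) \<noteq> 0"
    by simp
  obtain w :: 'a where w: "w\<^sup>2 + w + 1 = 0"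
    using cube_root_of_unity_exists[OF assms(2) card] .
  have isolated: "\<forall>\<pi> \<in> (affine_maps :: ('a option \<Rightarrow> 'a option) set). \<forall>\<sigma>. \<not> adjC \<pi> \<sigma>"
    using affine_maps_isolated[OF card] by blast
  have connected: "\<forall>r::'a. r \<noteq> 0 \<longrightarrow> connected_graph adjC (Pset r)"
    using connected_graph_Pset[OF card w two three] by blast
  let ?\<P> = "{{\<pi>} | \<pi>. \<pi> \<in> (affine_maps :: ('a option \<Rightarrow> 'a option) set)} \<union> {Pset r | r::'a. r \<noteq> 0}"
  have "\<Union>?\<P> = PGL2"
    unfolding PGL2_eq_affine_maps_Un_Psets by blast
  then have "components adjC PGL2 = ?\<P>"
    by (rule components_eqI)
      (use isolated connected connected_graph_singleton adjC_Pset_closed[OF card] in auto)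
  then show ?thesis
    using affine_maps_eq card_affine_maps card_Psets isolated connected by blast
qed

end
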